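(* Let $(A,\vee,\wedge,\bot,\top)$ be a bounded distributive lattice, and let $\mathcal{L}=(Expr_{\mathcal{L}},Th_{\mathcal{L}},\mathcal{C}_{\mathcal{L}})$ with $Expr_{\mathcal{L}}=A$, $Th_{\mathcal{L}}$ the set of proper filters of $A$, and $\mathcal{C}_{\mathcal{L}}=\{\vee,\wedge,\bot,\top\}$. Then $\mathcal{L}$ is a distributive abstract logic.
   Context: An abstract logic is a triple $\mathcal{L}=(Expr_{\mathcal{L}},Th_{\mathcal{L}},\mathcal{C}_{\mathcal{L}})$ where $Expr_{\mathcal{L}}$ is a set, $Th_{\mathcal{L}}$ a non-empty set of subsets of $Expr_{\mathcal{L}}$ (theories) with $\bigcap\mathcal{T}\in Th_{\mathcal{L}}$ for every non-empty $\mathcal{T}\subseteq Th_{\mathcal{L}}$, and $\mathcal{C}_{\mathcal{L}}$ a set of operations on $Expr_{\mathcal{L}}$. $\mathcal{L}$ is closed under union of chains if the union of every non-empty chain of theories is a theory. A theory $T$ is totally prime if whenever $T=\bigcap\mathcal{T}$ for a non-empty $\mathcal{T}\subseteq Th_{\mathcal{L}}$ (of any cardinality), $T\in\mathcal{T}$; $TPTh_{\mathcal{L}}$ is the set of totally prime theories. A distributive abstract logic is an abstract logic closed under union of chains with binary connectives $\vee,\wedge\in\mathcal{C}_{\mathcal{L}}$ such that for all $a,b$ and all $T\in TPTh_{\mathcal{L}}$: $a\vee b\in T$ iff $a\in T$ or $b\in T$; $a\wedge b\in T$ iff $a\in T$ and $b\in T$. *)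

theory Defs
  imports Main
begin

text \<open>Operations of an abstract logic are represented as pairs (arity, operation),
  where the operation acts on argument lists of length equal to the arity.\<close>

definition nullop :: "'a \<Rightarrow> nat \<times> ('a list \<Rightarrow> 'a)" where
  "nullop c = (0, \<lambda>_. c)"

definition binop :: "('a \<Rightarrow> 'a \<Rightarrow> 'a) \<Rightarrow> nat \<times> ('a list \<Rightarrow> 'a)" where
  "binop f = (2, \<lambda>xs. f (xs ! 0) (xs ! 1))"

definition abstract_logic ::
  "'a set \<Rightarrow> 'a set set \<Rightarrow> (nat \<times> ('a list \<Rightarrow> 'a)) set \<Rightarrow> bool" where
  "abstract_logic Expr Th C \<longleftrightarrow>
     Th \<noteq> {} \<and> (\<forall>T\<in>Th. T \<subseteq> Expr) \<and>
     (\<forall>\<T>. \<T> \<subseteq> Th \<and> \<T> \<noteq> {} \<longrightarrow> \<Inter>\<T> \<in> Th) \<and>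
     (\<forall>(n, f)\<in>C. \<forall>xs. length xs = n \<and> set xs \<subseteq> Expr \<longrightarrow> f xs \<in> Expr)"

definition closed_under_union_of_chains :: "'a set set \<Rightarrow> bool" where
  "closed_under_union_of_chains Th \<longleftrightarrow>
     (\<forall>\<T>. \<T> \<subseteq> Th \<and> \<T> \<noteq> {} \<and> (\<forall>X\<in>\<T>. \<forall>Y\<in>\<T>. X \<subseteq> Y \<or> Y \<subseteq> X)
        \<longrightarrow> \<Union>\<T> \<in> Th)"

definition totally_prime :: "'a set set \<Rightarrow> 'a set \<Rightarrow> bool" where
  "totally_prime Th T \<longleftrightarrow> T \<in> Th \<and>
     (\<forall>\<T>. \<T> \<subseteq> Th \<and> \<T> \<noteq> {} \<and> T = \<Inter>\<T> \<longrightarrow> T \<in> \<T>)"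

definition TPTh :: "'a set set \<Rightarrow> 'a set set" where
  "TPTh Th = {T. totally_prime Th T}"

definition distributive_abstract_logic ::
  "'a set \<Rightarrow> 'a set set \<Rightarrow> (nat \<times> ('a list \<Rightarrow> 'a)) set
     \<Rightarrow> ('a \<Rightarrow> 'a \<Rightarrow> 'a) \<Rightarrow> ('a \<Rightarrow> 'a \<Rightarrow> 'a) \<Rightarrow> bool" where
  "distributive_abstract_logic Expr Th C jn mt \<longleftrightarrow>
     abstract_logic Expr Th C \<and> closed_under_union_of_chains Th \<and>
     binop jn \<in> C \<and> binop mt \<in> C \<and>
     (\<forall>a\<in>Expr. \<forall>b\<in>Expr. \<forall>T\<in>TPTh Th.
        (jn a b \<in> T \<longleftrightarrow> a \<in> T \<or> b \<in> T) \<and>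
        (mt a b \<in> T \<longleftrightarrow> a \<in> T \<and> b \<in> T))"

definition proper_filter :: "'a::bounded_lattice set \<Rightarrow> bool" where
  "proper_filter F \<longleftrightarrow>
     top \<in> F \<and> (\<forall>x\<in>F. \<forall>y. x \<le> y \<longrightarrow> y \<in> F) \<and>
     (\<forall>x\<in>F. \<forall>y\<in>F. inf x y \<in> F) \<and> F \<noteq> UNIV"

end

theory Submission
  imports Defs
begin

text \<open>Proper filters are closed under non-empty intersections and unions of chains because
  each filter axiom involves at most two elements, and properness is witnessed by \<open>bot\<close>.
  For totally prime filters only primeness is at stake: if \<open>a \<squnion> b \<in> T\<close> but
  \<open>a, b \<notin> T\<close>, then by distributivity \<open>T\<close> is the intersection of the filters generated
  by \<open>T \<union> {a}\<close> and \<open>T \<union> {b}\<close>, both strictly larger than \<open>T\<close>.\<close>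

lemma proper_filter_bot_notin:
  fixes F :: "'a::bounded_lattice set"
  assumes "proper_filter F"
  shows "bot \<notin> F"
proof
  assume "bot \<in> F"
  then have "F = UNIV" using assms unfolding proper_filter_def by auto
  then show False using assms unfolding proper_filter_def by auto
qed

lemma proper_filter_top_singleton:
  assumes "(bot::'a::bounded_lattice) \<noteq> top"
  shows "proper_filter {top::'a}"
  unfolding proper_filter_def using assms top.extremum_unique by auto

lemma proper_filter_Inter:
  fixes \<T> :: "'a::bounded_lattice set set"
  assumes filters: "\<And>F. F \<in> \<T> \<Longrightarrow> proper_filter F" and "\<T> \<noteq> {}"
  shows "proper_filter (\<Inter>\<T>)"
  unfolding proper_filter_def
proof (intro conjI ballI allI impI)
  show "top \<in> \<Inter>\<T>" using filters unfolding proper_filter_def by blast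
  show "y \<in> \<Inter>\<T>" if "x \<in> \<Inter>\<T>" "x \<le> y" for x y
    using that filters unfolding proper_filter_def by blast
  show "inf x y \<in> \<Inter>\<T>" if "x \<in> \<Inter>\<T>" "y \<in> \<Inter>\<T>" for x y
    using that filters unfolding proper_filter_def by blast
  from \<open>\<T> \<noteq> {}\<close> obtain F where "F \<in> \<T>" by auto
  then have "bot \<notin> \<Inter>\<T>" using filters proper_filter_bot_notin by blast
  then show "\<Inter>\<T> \<noteq> UNIV" by blast
qed

lemma proper_filter_Union_chain:
  fixes \<T> :: "'a::bounded_lattice set set"
  assumes filters: "\<And>F. F \<in> \<T> \<Longrightarrow> proper_filter F" and "\<T> \<noteq> {}"
    and chain: "\<forall>X\<in>\<T>. \<forall>Y\<in>\<T>. X \<subseteq> Y \<or> Y \<subseteq> X"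
  shows "proper_filter (\<Union>\<T>)"
  unfolding proper_filter_def
proof (intro conjI ballI allI impI)
  show "top \<in> \<Union>\<T>" using filters \<open>\<T> \<noteq> {}\<close> unfolding proper_filter_def by blast
  show "y \<in> \<Union>\<T>" if "x \<in> \<Union>\<T>" "x \<le> y" for x y
    using that filters unfolding proper_filter_def by blast
  show "inf x y \<in> \<Union>\<T>" if "x \<in> \<Union>\<T>" "y \<in> \<Union>\<T>" for x y
  proof -
    from that obtain X Y where "X \<in> \<T>" "Y \<in> \<T>" "x \<in> X" "y \<in> Y" by auto
    with chain have "{x, y} \<subseteq> X \<or> {x, y} \<subseteq> Y" by blast
    then show ?thesis
      using \<open>X \<in> \<T>\<close> \<open>Y \<in> \<T>\<close> filters unfolding proper_filter_def by blast
  qed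
  have "bot \<notin> \<Union>\<T>" using filters proper_filter_bot_notin by blast
  then show "\<Union>\<T> \<noteq> UNIV" by blast
qed

lemma proper_filter_inf_iff:
  assumes "proper_filter T"
  shows "inf a b \<in> T \<longleftrightarrow> a \<in> T \<and> b \<in> T"
  using assms unfolding proper_filter_def by (meson inf_le1 inf_le2)

lemma proper_filter_sup_if:
  assumes "proper_filter T" and "a \<in> T \<or> b \<in> T"
  shows "sup a b \<in> T"
  using assms unfolding proper_filter_def by auto

definition filter_adjoin :: "'a::bounded_lattice set \<Rightarrow> 'a \<Rightarrow> 'a set" where
  "filter_adjoin T a = {y. \<exists>t\<in>T. inf t a \<le> y}"

lemma filter_adjoin_proper:
  fixes T :: "'a::bounded_lattice set"
  assumes "proper_filter T" and "filter_adjoin T a \<noteq> UNIV"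
  shows "proper_filter (filter_adjoin T a)"
  unfolding proper_filter_def
proof (intro conjI ballI allI impI)
  show "top \<in> filter_adjoin T a"
    using assms(1) unfolding filter_adjoin_def proper_filter_def by auto
  show "y \<in> filter_adjoin T a" if "x \<in> filter_adjoin T a" "x \<le> y" for x y
    using that unfolding filter_adjoin_def by (auto intro: order_trans)
  show "inf x y \<in> filter_adjoin T a"
    if "x \<in> filter_adjoin T a" and "y \<in> filter_adjoin T a" for x y
  proof -
    from that obtain s t where "s \<in> T" "inf s a \<le> x" "t \<in> T" "inf t a \<le> y"
      unfolding filter_adjoin_def by auto
    moreover from this have "inf s t \<in> T" using assms(1) unfolding proper_filter_def by auto
    moreover have "inf (inf s t) a \<le> inf x y"
      using \<open>inf s a \<le> x\<close> \<open>inf t a \<le> y\<close> by (meson inf_le1 inf_le2 le_inf_iff order_trans)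
    ultimately show ?thesis unfolding filter_adjoin_def by auto
  qed
  show "filter_adjoin T a \<noteq> UNIV" by fact
qed

lemma mem_filter_adjoin:
  assumes "proper_filter T"
  shows "a \<in> filter_adjoin T a"
  using assms unfolding filter_adjoin_def proper_filter_def by auto

lemma subset_filter_adjoin: "T \<subseteq> filter_adjoin T a"
  unfolding filter_adjoin_def using inf_le1 by blast

lemma filter_adjoin_Int_subset:
  fixes T :: "'a::{distrib_lattice, bounded_lattice} set"
  assumes "proper_filter T" and "sup a b \<in> T"
  shows "filter_adjoin T a \<inter> filter_adjoin T b \<subseteq> T"
proof
  fix y assume "y \<in> filter_adjoin T a \<inter> filter_adjoin T b"
  then obtain s t where "s \<in> T" "inf s a \<le> y" "t \<in> T" "inf t b \<le> y"
    unfolding filter_adjoin_def by auto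
  then have mem: "inf (inf s t) (sup a b) \<in> T"
    using assms unfolding proper_filter_def by auto
  have "inf (inf s t) (sup a b) = sup (inf (inf s t) a) (inf (inf s t) b)"
    by (rule inf_sup_distrib1)
  also have "\<dots> \<le> y"
    using \<open>inf s a \<le> y\<close> \<open>inf t b \<le> y\<close> by (meson inf_le1 inf_le2 le_inf_iff order_trans le_supI)
  finally show "y \<in> T" using mem assms(1) unfolding proper_filter_def by auto
qed

lemma totally_prime_filter_sup_cases:
  fixes T :: "'a::{distrib_lattice, bounded_lattice} set"
  assumes tp: "totally_prime {F. proper_filter F} T" and "sup a b \<in> T"
  shows "a \<in> T \<or> b \<in> T"
proof (rule ccontr)
  assume notin: "\<not> (a \<in> T \<or> b \<in> T)"
  have T: "proper_filter T" using tp unfolding totally_prime_def by auto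
  define \<T> where "\<T> = {filter_adjoin T a, filter_adjoin T b} - {UNIV}"
  have "\<Inter>\<T> = filter_adjoin T a \<inter> filter_adjoin T b"
    unfolding \<T>_def by auto
  then have "T = \<Inter>\<T>"
    using filter_adjoin_Int_subset[OF T \<open>sup a b \<in> T\<close>] subset_filter_adjoin by blast
  moreover have "\<T> \<noteq> {}"
    using \<open>T = \<Inter>\<T>\<close> T unfolding proper_filter_def by auto
  moreover have "\<T> \<subseteq> {F. proper_filter F}"
    unfolding \<T>_def using filter_adjoin_proper[OF T] by auto
  ultimately have "T \<in> \<T>" using tp unfolding totally_prime_def by blast
  then show False
    unfolding \<T>_def using notin mem_filter_adjoin[OF T, of a] mem_filter_adjoin[OF T, of b] by auto
qed

theorem lemma3p8:
  assumes "(bot::'a::{distrib_lattice, bounded_lattice}) \<noteq> top"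
  shows "distributive_abstract_logic (UNIV::'a set) {F. proper_filter F}
           {binop sup, binop inf, nullop bot, nullop top} sup inf"
proof -
  have "abstract_logic (UNIV::'a set) {F. proper_filter F} {binop sup, binop inf, nullop bot, nullop top}"
    unfolding abstract_logic_def
  proof (intro conjI)
    show "{F::'a set. proper_filter F} \<noteq> {}"
      using proper_filter_top_singleton[OF assms] by blast
    show "\<forall>\<T>. \<T> \<subseteq> {F. proper_filter F} \<and> \<T> \<noteq> {} \<longrightarrow> \<Inter>\<T> \<in> {F::'a set. proper_filter F}"
      by (simp add: proper_filter_Inter subset_eq)
  qed simp_all
  moreover have "closed_under_union_of_chains {F::'a set. proper_filter F}"
    unfolding closed_under_union_of_chains_def by (simp add: proper_filter_Union_chain subset_eq)
  moreover have "(sup a b \<in> T \<longleftrightarrow> a \<in> T \<or> b \<in> T) \<and> (inf a b \<in> T \<longleftrightarrow> a \<in> T \<and> b \<in> T)"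
    if "T \<in> TPTh {F. proper_filter F}" for a b :: 'a and T
  proof -
    from that have tp: "totally_prime {F. proper_filter F} T" unfolding TPTh_def by simp
    then have "proper_filter T" unfolding totally_prime_def by simp
    with tp show ?thesis
      using totally_prime_filter_sup_cases proper_filter_sup_if proper_filter_inf_iff by blast
  qed
  ultimately show ?thesis by (simp add: distributive_abstract_logic_def)
qed

end
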